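(* Let $a_0,a_1\in\mathbb{C}$ with $a_1\neq0$ such that the polynomial $f(x)=a_0+a_1x$ has no positive integer root, and let $\Lambda=a_0D+a_1DxD$. Then the monic polynomial sequences that are both $\Lambda$-Appell and orthogonal are exactly the Laguerre sequences with parameter $\alpha=a_0/a_1$, up to an affine transformation.
   Context: $\mathcal{P}$ is the space of complex polynomials, $D$ the derivative, $x$ multiplication by $x$, products are compositions. A monic polynomial sequence (MPS) is $\{B_n\}_{n\ge0}$ with $B_n$ monic of degree $n$. An MPS is $\Lambda$-Appell if $\Lambda B_{n+1}=\rho_nB_n$ for all $n\ge0$, where $\rho_n=(n+1)f(n+1)$. An MPS is orthogonal with respect to a linear functional $u$ on $\mathcal{P}$ if $\langle u,B_nB_m\rangle=0$ for $n\neq m$ and $\langle u,B_n^2\rangle\neq0$. The (monic) Laguerre sequence with parameter $\alpha\notin\mathbb{Z}^-$ is the monic orthogonal sequence whose functional $u$ satisfies $D(xu)+(x-\alpha-1)u=0$, where on functionals $\langle Du,p\rangle=-\langle u,p'\rangle$ and $\langle xu,p\rangle=\langle u,xp\rangle$. An affine transformation of an MPS $\{B_n\}$ is the MPS $\{c^{-n}B_n(cx+d)\}$ for constants $c\neq0$, $d$. *)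

theory Defs
  imports "HOL-Computational_Algebra.Polynomial"
begin

definition MPS :: "(nat \<Rightarrow> complex poly) \<Rightarrow> bool" where
  "MPS B \<longleftrightarrow> (\<forall>n. degree (B n) = n \<and> lead_coeff (B n) = 1)"

definition Lam :: "complex \<Rightarrow> complex \<Rightarrow> complex poly \<Rightarrow> complex poly" where
  "Lam a0 a1 p = smult a0 (pderiv p) + smult a1 (pderiv ([:0, 1:] * pderiv p))"

definition rho :: "complex \<Rightarrow> complex \<Rightarrow> nat \<Rightarrow> complex" where
  "rho a0 a1 n = of_nat (n + 1) * (a0 + a1 * of_nat (n + 1))"

definition Lambda_Appell :: "complex \<Rightarrow> complex \<Rightarrow> (nat \<Rightarrow> complex poly) \<Rightarrow> bool" where
  "Lambda_Appell a0 a1 B \<longleftrightarrow> MPS B \<and>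
     (\<forall>n. Lam a0 a1 (B (Suc n)) = smult (rho a0 a1 n) (B n))"

definition lin_functional :: "(complex poly \<Rightarrow> complex) \<Rightarrow> bool" where
  "lin_functional u \<longleftrightarrow> (\<forall>p q. u (p + q) = u p + u q) \<and> (\<forall>c p. u (smult c p) = c * u p)"

definition orthogonal_wrt :: "(complex poly \<Rightarrow> complex) \<Rightarrow> (nat \<Rightarrow> complex poly) \<Rightarrow> bool" where
  "orthogonal_wrt u B \<longleftrightarrow> lin_functional u \<and>
     (\<forall>n m. n \<noteq> m \<longrightarrow> u (B n * B m) = 0) \<and> (\<forall>n. u (B n * B n) \<noteq> 0)"

definition orthogonal_MPS :: "(nat \<Rightarrow> complex poly) \<Rightarrow> bool" where
  "orthogonal_MPS B \<longleftrightarrow> MPS B \<and> (\<exists>u. orthogonal_wrt u B)"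

text \<open>Pearson equation D(xu) + (x - alpha - 1) u = 0, evaluated on polynomials p:
  <D(xu),p> = - <u, x p'>, <(x-alpha-1)u, p> = <u, (x-alpha-1) p>.\<close>
definition laguerre_pearson :: "complex \<Rightarrow> (complex poly \<Rightarrow> complex) \<Rightarrow> bool" where
  "laguerre_pearson \<alpha> u \<longleftrightarrow>
     (\<forall>p. - u ([:0, 1:] * pderiv p) + u ([:- \<alpha> - 1, 1:] * p) = 0)"

definition is_laguerre :: "complex \<Rightarrow> (nat \<Rightarrow> complex poly) \<Rightarrow> bool" where
  "is_laguerre \<alpha> L \<longleftrightarrow> MPS L \<and> (\<exists>u. orthogonal_wrt u L \<and> laguerre_pearson \<alpha> u)"

definition affine_transform :: "complex \<Rightarrow> complex \<Rightarrow> (nat \<Rightarrow> complex poly) \<Rightarrow> nat \<Rightarrow> complex poly" where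
  "affine_transform c d B n = smult (inverse (c ^ n)) (pcompose (B n) [:d, c:])"

end

theory Submission
  imports Defs
begin

text \<open>
  Since \<open>\<Lambda> x^k = k f(k) x^(k-1)\<close>, a \<open>\<Lambda>\<close>-Appell sequence is determined by its constant
  terms \<open>B_n(0)\<close>. If \<open>u\<close> satisfies the Laguerre Pearson equation with \<open>\<alpha> = a0/a1\<close>, then
  \<open>u(q \<Lambda>r) = a1 (u(x q r') - u(x q' r'))\<close>; hence \<open>\<Lambda> L_(n+1)\<close> is orthogonal to every
  polynomial of degree \<open>< n\<close> and so is a multiple of \<open>L_n\<close>: Laguerre sequences are
  \<open>\<Lambda>\<close>-Appell. The explicit Laguerre polynomials, with moments \<open>u(x^k) = (\<alpha>+1)_k\<close>, are
  orthogonal because the Laguerre differential operator is symmetric for \<open>u\<close> and has the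
  distinct eigenvalues \<open>-n\<close> on them; the same identity gives
  \<open>a1 u(L_(n+1)^2) = \<rho>_n u(L_n^2)\<close>, so no norm vanishes as \<open>f\<close> has no positive integer root.

  Conversely, comparing coefficients in the three-term recurrence of an orthogonal
  \<open>\<Lambda>\<close>-Appell sequence in degrees up to 5 forces \<open>B_1(0) \<noteq> 0\<close> and
  \<open>f(1) B_2(0) = f(2) B_1(0)^2\<close>. A rescaled Laguerre sequence \<open>c^(-n) L_n(c x)\<close> with the same
  \<open>B_1(0)\<close> therefore also has the same \<open>B_2(0)\<close>, and the recurrence determines all further
  constant terms from these two.
\<close>

lemma lin_functional_add: "lin_functional u \<Longrightarrow> u (p + q) = u p + u q"
  by (simp add: lin_functional_def)

lemma lin_functional_smult: "lin_functional u \<Longrightarrow> u (smult c p) = c * u p"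
  by (simp add: lin_functional_def)

lemma lin_functional_zero: "lin_functional u \<Longrightarrow> u 0 = 0"
  using lin_functional_smult[of u 0 0] by simp

lemma lin_functional_minus: "lin_functional u \<Longrightarrow> u (- p) = - u p"
  using lin_functional_smult[of u "-1" p] by simp

lemma lin_functional_diff: "lin_functional u \<Longrightarrow> u (p - q) = u p - u q"
  using lin_functional_add[of u p "- q"] lin_functional_minus[of u q] by simp

lemma lin_functional_sum: "lin_functional u \<Longrightarrow> u (sum f A) = (\<Sum>i\<in>A. u (f i))"
  by (induction A rule: infinite_finite_induct) (simp_all add: lin_functional_zero lin_functional_add)

lemmas lin_functional_simps =
  lin_functional_add lin_functional_smult lin_functional_zero lin_functional_minus lin_functional_diff

lemma lin_functional_mult_left: "lin_functional u \<Longrightarrow> lin_functional (\<lambda>q. u (p * q))"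
  by (simp add: lin_functional_def distrib_left lin_functional_add)

lemma lin_functional_eq_sum_monoms:
  assumes "lin_functional u"
  shows "u p = (\<Sum>k\<le>degree p. coeff p k * u (monom 1 k))"
proof -
  have "u p = u (\<Sum>k\<le>degree p. smult (coeff p k) (monom 1 k))"
    by (simp add: smult_monom poly_as_sum_of_monoms)
  then show ?thesis by (simp add: assms lin_functional_sum lin_functional_smult)
qed

lemma MPS_degree: "MPS B \<Longrightarrow> degree (B n) = n"
  by (simp add: MPS_def)

lemma MPS_lead: "MPS B \<Longrightarrow> coeff (B n) n = 1"
  by (metis MPS_def)

lemma MPS_coeff_above: "MPS B \<Longrightarrow> n < k \<Longrightarrow> coeff (B n) k = 0"
  by (simp add: MPS_degree coeff_eq_0)

lemma MPS_0: "MPS B \<Longrightarrow> B 0 = 1"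
  by (metis MPS_degree MPS_lead degree_0_id one_pCons)

lemma MPS_degree_sub_lead:
  assumes "MPS B" "degree p \<le> Suc n"
  shows "degree (p - smult (coeff p (Suc n)) (B (Suc n))) \<le> n"
proof (rule degree_le, intro allI impI)
  fix k assume "n < k"
  then show "coeff (p - smult (coeff p (Suc n)) (B (Suc n))) k = 0"
    using assms by (cases "k = Suc n") (simp_all add: MPS_lead MPS_coeff_above coeff_eq_0)
qed

lemma coeff_x_mult:
  "coeff ([:0, 1:] * (p :: 'a :: comm_semiring_1 poly)) k = (if k = 0 then 0 else coeff p (k - 1))"
  by (cases k) (simp_all add: coeff_pCons)

lemma degree_x_mult_le: "degree ([:0, 1:] * (p :: 'a :: comm_semiring_1 poly)) \<le> Suc (degree p)"
  using degree_mult_le[of "[:0, 1:]" p] by simp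

lemma lin_functional_vanishes_below:
  assumes "lin_functional \<phi>" "MPS B" "\<forall>k\<le>d. \<phi> (B k) = 0" "degree p \<le> d"
  shows "\<phi> p = 0"
  using assms(3,4)
proof (induction d arbitrary: p)
  case 0
  then have "p = smult (coeff p 0) (B 0)"
    using MPS_0[OF assms(2)] by (simp add: degree_0_id)
  then show ?case
    using 0 by (metis assms(1) lin_functional_smult le_refl mult_zero_right)
next
  case (Suc d)
  define r where "r = p - smult (coeff p (Suc d)) (B (Suc d))"
  have "\<phi> r = 0"
    using Suc MPS_degree_sub_lead[OF assms(2) Suc.prems(2)] by (simp add: r_def)
  moreover have "p = r + smult (coeff p (Suc d)) (B (Suc d))"
    by (simp add: r_def)
  ultimately show ?case
    using Suc.prems(1) assms(1)
    by (metis lin_functional_add lin_functional_smult add_0 le_refl mult_zero_right)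
qed

locale orthogonal_family =
  fixes u :: "complex poly \<Rightarrow> complex" and B :: "nat \<Rightarrow> complex poly"
  assumes lin: "lin_functional u"
    and MPS: "MPS B"
    and orthogonal: "n \<noteq> m \<Longrightarrow> u (B n * B m) = 0"
begin

lemma orthogonal_lower: "degree q < n \<Longrightarrow> u (B n * q) = 0"
  by (rule lin_functional_vanishes_below[OF lin_functional_mult_left[OF lin] MPS, of "n - 1"])
    (auto intro: orthogonal)

lemma orthogonal_lower': "degree q < n \<Longrightarrow> u (q * B n) = 0"
  using orthogonal_lower by (simp add: mult.commute)

lemma orthogonal_lead:
  "u (B (degree r) * r) = lead_coeff r * u (B (degree r) * B (degree r))"
proof -
  define k where "k = degree r"
  define r' where "r' = r - smult (coeff r k) (B k)"
  have "u (B k * r') = 0"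
  proof (cases k)
    case 0
    then have "r' = 0"
      using MPS_0[OF MPS] by (simp add: r'_def k_def degree_0_id)
    then show ?thesis by (simp add: lin_functional_zero[OF lin])
  next
    case (Suc d)
    then have "degree r' \<le> d"
      unfolding r'_def using MPS_degree_sub_lead[OF MPS, of r d] k_def by simp
    then show ?thesis using Suc by (intro orthogonal_lower) auto
  qed
  moreover have "B k * r = smult (coeff r k) (B k * B k) + B k * r'"
    by (simp add: r'_def algebra_simps)
  ultimately show ?thesis
    by (simp add: k_def lin_functional_simps[OF lin])
qed

lemma x_mult_diff_degree: "degree ([:0, 1:] * B n - B (Suc n)) \<le> n"
proof (rule degree_le, intro allI impI)
  fix i assume "n < i"
  then show "coeff ([:0, 1:] * B n - B (Suc n)) i = 0"
    using MPS
    by (cases "i = Suc n") (auto simp: coeff_pCons MPS_lead MPS_coeff_above split: nat.split)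
qed

lemma x_mult_orthogonal_Suc: "u ([:0, 1:] * B n * B (Suc n)) = u (B (Suc n) * B (Suc n))"
proof -
  have "u (([:0, 1:] * B n - B (Suc n)) * B (Suc n)) = 0"
    using x_mult_diff_degree[of n] by (intro orthogonal_lower') simp
  then show ?thesis
    by (simp add: left_diff_distrib lin_functional_diff[OF lin])
qed

end

locale regular_orthogonal_family = orthogonal_family +
  assumes norm_nonzero: "u (B n * B n) \<noteq> 0"
begin

lemma eq_smult_if_orthogonal_lower:
  assumes "degree p \<le> n" "\<And>q. degree q < n \<Longrightarrow> u (q * p) = 0"
  shows "p = smult (coeff p n) (B n)"
proof (rule ccontr)
  define r where "r = p - smult (coeff p n) (B n)"
  assume "p \<noteq> smult (coeff p n) (B n)"
  then have "r \<noteq> 0" by (simp add: r_def)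
  moreover have "degree r \<le> n" "coeff r n = 0"
    using assms(1) MPS by (simp_all add: r_def degree_diff_le MPS_degree MPS_lead)
  ultimately have "degree r < n"
    by (metis leading_coeff_0_iff le_neq_implies_less)
  define k where "k = degree r"
  have "u (B k * p) = 0" "u (B n * B k) = 0"
    using assms(2) \<open>degree r < n\<close> orthogonal_lower by (simp_all add: k_def MPS_degree[OF MPS])
  then have "u (B k * r) = 0"
    by (simp add: r_def right_diff_distrib lin_functional_simps[OF lin] mult.commute)
  moreover have "u (B k * r) = lead_coeff r * u (B k * B k)"
    using orthogonal_lead by (simp add: k_def)
  ultimately show False
    using \<open>r \<noteq> 0\<close> norm_nonzero by simp
qed

lemma three_term_recurrence:
  "\<exists>s t. t \<noteq> 0
    \<and> [:0, 1:] * B (Suc n) = B (Suc (Suc n)) + smult s (B (Suc n)) + smult t (B n)"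
proof -
  define p where "p = [:0, 1:] * B (Suc n) - B (Suc (Suc n))"
  define s where "s = coeff p (Suc n)"
  define r where "r = p - smult s (B (Suc n))"
  have "degree r \<le> n"
    unfolding r_def s_def p_def by (rule MPS_degree_sub_lead[OF MPS x_mult_diff_degree])
  moreover have "u (q * r) = 0" if "degree q < n" for q
  proof -
    have "degree (q * [:0, 1:]) < Suc n"
      using that degree_mult_le[of q "[:0, 1:]"] by simp
    then have "u (B (Suc n) * (q * [:0, 1:])) = 0"
      by (rule orthogonal_lower)
    moreover have "u (B (Suc (Suc n)) * q) = 0" "u (B (Suc n) * q) = 0"
      using that by (simp_all add: orthogonal_lower)
    moreover have "q * r
        = B (Suc n) * (q * [:0, 1:]) - B (Suc (Suc n)) * q - smult s (B (Suc n) * q)"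
      by (simp add: r_def p_def algebra_simps)
    ultimately show ?thesis by (simp add: lin_functional_simps[OF lin])
  qed
  ultimately have "r = smult (coeff r n) (B n)"
    by (rule eq_smult_if_orthogonal_lower)
  then have rec:
      "[:0, 1:] * B (Suc n) = B (Suc (Suc n)) + smult s (B (Suc n)) + smult (coeff r n) (B n)"
    unfolding r_def p_def by (simp add: algebra_simps)
  have "u (B (Suc n) * B (Suc n)) = u ([:0, 1:] * B (Suc n) * B n)"
    using x_mult_orthogonal_Suc[of n] by (simp add: ac_simps)
  also have "\<dots> = coeff r n * u (B n * B n)"
    unfolding rec by (simp add: distrib_right lin_functional_simps[OF lin] orthogonal)
  finally have "coeff r n \<noteq> 0"
    using norm_nonzero by auto
  with rec show ?thesis by blast
qed

end

lemma regular_orthogonal_familyI: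
  "orthogonal_wrt u B \<Longrightarrow> MPS B \<Longrightarrow> regular_orthogonal_family u B"
  by (simp add: orthogonal_wrt_def regular_orthogonal_family_def orthogonal_family_def
      regular_orthogonal_family_axioms_def)

definition Lam_factor :: "complex \<Rightarrow> complex \<Rightarrow> nat \<Rightarrow> complex" where
  "Lam_factor a0 a1 k = of_nat k * (a0 + a1 * of_nat k)"

lemma rho_eq_Lam_factor: "rho a0 a1 n = Lam_factor a0 a1 (Suc n)"
  by (simp add: rho_def Lam_factor_def)

lemma Lam_factor_nonzero:
  assumes "\<forall>n::nat. n \<ge> 1 \<longrightarrow> a0 + a1 * of_nat n \<noteq> 0"
  shows "Lam_factor a0 a1 (Suc k) \<noteq> 0"
  using assms[rule_format, of "Suc k"] by (simp add: Lam_factor_def del: of_nat_Suc)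

lemma coeff_Lam: "coeff (Lam a0 a1 p) k = Lam_factor a0 a1 (Suc k) * coeff p (Suc k)"
  by (simp add: Lam_def Lam_factor_def coeff_pderiv coeff_x_mult algebra_simps)

lemma Lambda_Appell_coeff:
  assumes "Lambda_Appell a0 a1 B"
  shows "Lam_factor a0 a1 (Suc k) * coeff (B (Suc n)) (Suc k)
    = Lam_factor a0 a1 (Suc n) * coeff (B n) k"
proof -
  have "Lam a0 a1 (B (Suc n)) = smult (rho a0 a1 n) (B n)"
    using assms by (simp add: Lambda_Appell_def)
  then show ?thesis
    by (metis coeff_Lam coeff_smult rho_eq_Lam_factor)
qed

lemma Lambda_Appell_Suc_eqI:
  assumes "\<forall>n::nat. n \<ge> 1 \<longrightarrow> a0 + a1 * of_nat n \<noteq> 0"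
    and "Lambda_Appell a0 a1 B" "Lambda_Appell a0 a1 S" "B n = S n"
    and "coeff (B (Suc n)) 0 = coeff (S (Suc n)) 0"
  shows "B (Suc n) = S (Suc n)"
proof (rule poly_eqI)
  fix k
  have "coeff (B (Suc n)) (Suc j) = coeff (S (Suc n)) (Suc j)" for j
  proof -
    have "Lam_factor a0 a1 (Suc j) * coeff (B (Suc n)) (Suc j)
        = Lam_factor a0 a1 (Suc j) * coeff (S (Suc n)) (Suc j)"
      using Lambda_Appell_coeff[OF assms(2), of j n] Lambda_Appell_coeff[OF assms(3), of j n]
        assms(4) by simp
    then show ?thesis using Lam_factor_nonzero[OF assms(1)] by simp
  qed
  then show "coeff (B (Suc n)) k = coeff (S (Suc n)) k"
    using assms(5) by (cases k) auto
qed

lemma laguerre_pearson_x_pderiv: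
  assumes "lin_functional u" "laguerre_pearson \<alpha> u"
  shows "u ([:0, 1:] * pderiv p) = u ([:0, 1:] * p) - (\<alpha> + 1) * u p"
proof -
  have "[:- \<alpha> - 1, 1:] * p = [:0, 1:] * p + smult (- \<alpha> - 1) p"
    by (simp add: algebra_simps)
  then have "u ([:- \<alpha> - 1, 1:] * p) = u ([:0, 1:] * p) - (\<alpha> + 1) * u p"
    by (simp add: lin_functional_add[OF assms(1)] lin_functional_smult[OF assms(1)] algebra_simps)
  then show ?thesis
    using assms(2) unfolding laguerre_pearson_def by (metis add_eq_0_iff2 neg_equal_iff_equal)
qed

lemma laguerre_pearson_x_mult_pderiv:
  assumes "lin_functional u" "laguerre_pearson \<alpha> u"
  shows "u ([:0, 1:] * (w * pderiv r))
    = u ([:0, 1:] * (w * r)) - (\<alpha> + 1) * u (w * r) - u ([:0, 1:] * (pderiv w * r))"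
proof -
  have "[:0, 1:] * pderiv (w * r) = [:0, 1:] * (w * pderiv r) + [:0, 1:] * (pderiv w * r)"
    by (simp only: pderiv_mult distrib_left mult.commute[of r "pderiv w"])
  then show ?thesis
    using laguerre_pearson_x_pderiv[OF assms, of "w * r"]
    by (simp only: lin_functional_add[OF assms(1)]) (simp add: algebra_simps)
qed

lemma Lam_eq_Laguerre_operator:
  assumes "a0 = a1 * \<alpha>"
  shows "Lam a0 a1 r = smult a1 (smult (\<alpha> + 1) (pderiv r) + [:0, 1:] * pderiv (pderiv r))"
  unfolding Lam_def assms
  by (simp add: pderiv_mult pderiv_pCons algebra_simps smult_add_left smult_add_right)

lemma laguerre_pearson_mult_Lam:
  assumes "lin_functional u" "laguerre_pearson \<alpha> u" "a0 = a1 * \<alpha>"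
  shows "u (q * Lam a0 a1 r)
    = a1 * (u ([:0, 1:] * (q * pderiv r)) - u ([:0, 1:] * (pderiv q * pderiv r)))"
proof -
  have "q * Lam a0 a1 r
      = smult a1 (smult (\<alpha> + 1) (q * pderiv r) + [:0, 1:] * (q * pderiv (pderiv r)))"
    unfolding Lam_eq_Laguerre_operator[OF assms(3)] by (simp add: algebra_simps)
  then have "u (q * Lam a0 a1 r)
      = a1 * ((\<alpha> + 1) * u (q * pderiv r) + u ([:0, 1:] * (q * pderiv (pderiv r))))"
    by (simp only: lin_functional_add[OF assms(1)] lin_functional_smult[OF assms(1)])
  then show ?thesis
    unfolding laguerre_pearson_x_mult_pderiv[OF assms(1,2), of q "pderiv r"]
    by (simp add: algebra_simps)
qed

definition laguerre_op :: "complex \<Rightarrow> complex poly \<Rightarrow> complex poly" where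
  "laguerre_op \<alpha> q = [:0, 1:] * pderiv (pderiv q) + [:\<alpha> + 1, -1:] * pderiv q"

lemma coeff_laguerre_op:
  "coeff (laguerre_op \<alpha> q) k
    = of_nat (Suc k) * (\<alpha> + of_nat k + 1) * coeff q (Suc k) - of_nat k * coeff q k"
  by (cases k) (simp_all add: laguerre_op_def coeff_pderiv algebra_simps)

lemma laguerre_pearson_op_symmetric:
  assumes "lin_functional u" "laguerre_pearson \<alpha> u"
  shows "u (p * laguerre_op \<alpha> q) = u (q * laguerre_op \<alpha> p)"
proof -
  define W where "W = p * pderiv q - q * pderiv p"
  have "pderiv W = p * pderiv (pderiv q) - q * pderiv (pderiv p)"
    unfolding W_def by (simp add: pderiv_mult pderiv_diff algebra_simps)
  moreover have "[:\<alpha> + 1, -1:] = [:\<alpha> + 1:] - [:0, 1:]"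
    by simp
  moreover have "p * (x * q2 + (a - x) * q1) = q * (x * p2 + (a - x) * p1)
      + (x * (p * q2 - q * p2) + a * (p * q1 - q * p1) - x * (p * q1 - q * p1))"
    for x a p q p1 q1 p2 q2 :: "complex poly"
    by (simp add: algebra_simps)
  ultimately have "p * laguerre_op \<alpha> q
      = q * laguerre_op \<alpha> p + ([:0, 1:] * pderiv W + [:\<alpha> + 1:] * W - [:0, 1:] * W)"
    unfolding laguerre_op_def W_def by metis
  moreover have "u ([:0, 1:] * pderiv W + smult (\<alpha> + 1) W - [:0, 1:] * W) = 0"
    using laguerre_pearson_x_pderiv[OF assms, of W] by (simp add: lin_functional_simps[OF assms(1)])
  ultimately show ?thesis
    by (simp add: lin_functional_add[OF assms(1)])
qed

context orthogonal_family
begin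

lemma laguerre_pearson_x_mult_pderiv_lower:
  assumes "laguerre_pearson \<alpha> u" "degree w < n"
  shows "u ([:0, 1:] * (w * pderiv (B (Suc n)))) = 0"
proof -
  have "degree ([:0, 1:] * w) < Suc n" "degree ([:0, 1:] * pderiv w) < Suc n"
    using degree_x_mult_le[of w] degree_x_mult_le[of "pderiv w"] degree_pderiv[of w] assms(2)
    by linarith+
  then have "u (([:0, 1:] * w) * B (Suc n)) = 0" "u (([:0, 1:] * pderiv w) * B (Suc n)) = 0"
    by (simp_all only: orthogonal_lower')
  moreover have "u (w * B (Suc n)) = 0"
    using assms(2) by (simp add: orthogonal_lower')
  ultimately show ?thesis
    using laguerre_pearson_x_mult_pderiv[OF lin assms(1), of w "B (Suc n)"] by (simp add: mult.assoc)
qed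

lemma laguerre_pearson_norm_recurrence:
  assumes "laguerre_pearson \<alpha> u" "a0 = a1 * \<alpha>"
    and "Lam a0 a1 (B (Suc m)) = smult (rho a0 a1 m) (B m)"
  shows "a1 * u (B (Suc m) * B (Suc m)) = rho a0 a1 m * u (B m * B m)"
proof -
  let ?x = "[:0, 1:] :: complex poly"
  have "u (?x * (pderiv (B m) * pderiv (B (Suc m)))) = 0
      \<and> u (?x * (pderiv (B m) * B (Suc m))) = 0"
  proof (cases m)
    case 0
    then show ?thesis using MPS_0[OF MPS] by (simp add: lin_functional_zero[OF lin])
  next
    case (Suc j)
    then have "degree (pderiv (B m)) < m" and "degree (?x * pderiv (B m)) < Suc m"
      using degree_x_mult_le[of "pderiv (B m)"] degree_pderiv[of "B m"] MPS_degree[OF MPS, of m]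
      by simp_all
    have "u (?x * (pderiv (B m) * pderiv (B (Suc m)))) = 0"
      using \<open>degree (pderiv (B m)) < m\<close>
      by (rule laguerre_pearson_x_mult_pderiv_lower[OF assms(1)])
    moreover have "u ((?x * pderiv (B m)) * B (Suc m)) = 0"
      using \<open>degree (?x * pderiv (B m)) < Suc m\<close> by (rule orthogonal_lower')
    ultimately show ?thesis by (simp only: mult.assoc)
  qed
  moreover have "u (?x * (B m * B (Suc m))) = u (B (Suc m) * B (Suc m))"
    using x_mult_orthogonal_Suc by (simp add: mult.assoc)
  moreover have "u (B m * B (Suc m)) = 0"
    by (simp add: orthogonal)
  ultimately have "u (B m * Lam a0 a1 (B (Suc m))) = a1 * u (B (Suc m) * B (Suc m))"
    using laguerre_pearson_mult_Lam[OF lin assms(1,2), of "B m" "B (Suc m)"]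
      laguerre_pearson_x_mult_pderiv[OF lin assms(1), of "B m" "B (Suc m)"] by simp
  then show ?thesis
    using assms(3) by (simp add: lin_functional_smult[OF lin] mult.commute)
qed

end

context regular_orthogonal_family
begin

lemma laguerre_pearson_Lambda_Appell:
  assumes "laguerre_pearson \<alpha> u" "a0 = a1 * \<alpha>"
  shows "Lam a0 a1 (B (Suc n)) = smult (rho a0 a1 n) (B n)"
proof -
  have "degree (Lam a0 a1 (B (Suc n))) \<le> n"
    by (rule degree_le) (simp add: coeff_Lam MPS_coeff_above[OF MPS])
  moreover have "u (q * Lam a0 a1 (B (Suc n))) = 0" if "degree q < n" for q
  proof -
    have "u ([:0, 1:] * (q * pderiv (B (Suc n)))) = 0"
      "u ([:0, 1:] * (pderiv q * pderiv (B (Suc n)))) = 0"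
      using that degree_pderiv[of q]
      by (intro laguerre_pearson_x_mult_pderiv_lower[OF assms(1)]; simp)+
    then show ?thesis
      using laguerre_pearson_mult_Lam[OF lin assms, of q "B (Suc n)"] by simp
  qed
  ultimately have "Lam a0 a1 (B (Suc n)) = smult (coeff (Lam a0 a1 (B (Suc n))) n) (B n)"
    by (rule eq_smult_if_orthogonal_lower)
  then show ?thesis
    by (simp add: coeff_Lam MPS_lead[OF MPS] rho_eq_Lam_factor)
qed

end

definition laguerre_coeff :: "complex \<Rightarrow> nat \<Rightarrow> nat \<Rightarrow> complex" where
  "laguerre_coeff \<alpha> n k
    = (-1) ^ (n - k) * of_nat (n choose k) * pochhammer (\<alpha> + of_nat k + 1) (n - k)"

definition laguerre_poly :: "complex \<Rightarrow> nat \<Rightarrow> complex poly" where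
  "laguerre_poly \<alpha> n = (\<Sum>k\<le>n. monom (laguerre_coeff \<alpha> n k) k)"

definition laguerre_moments :: "complex \<Rightarrow> complex poly \<Rightarrow> complex" where
  "laguerre_moments \<alpha> p = (\<Sum>k\<le>degree p. coeff p k * pochhammer (\<alpha> + 1) k)"

lemma coeff_laguerre_poly:
  "coeff (laguerre_poly \<alpha> n) k = (if k \<le> n then laguerre_coeff \<alpha> n k else 0)"
  unfolding laguerre_poly_def coeff_sum coeff_monom by (simp add: sum.delta)

lemma laguerre_coeff_diag [simp]: "laguerre_coeff \<alpha> n n = 1"
  by (simp add: laguerre_coeff_def)

lemma MPS_laguerre_poly: "MPS (laguerre_poly \<alpha>)"
  unfolding MPS_def
proof
  fix n
  have "degree (laguerre_poly \<alpha> n) \<le> n"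
    by (rule degree_le) (simp add: coeff_laguerre_poly)
  moreover have "coeff (laguerre_poly \<alpha> n) n \<noteq> 0"
    by (simp add: coeff_laguerre_poly)
  ultimately have "degree (laguerre_poly \<alpha> n) = n"
    by (simp add: le_antisym le_degree)
  then show "degree (laguerre_poly \<alpha> n) = n \<and> lead_coeff (laguerre_poly \<alpha> n) = 1"
    by (simp add: coeff_laguerre_poly)
qed

lemma laguerre_moments_eq:
  assumes "degree p \<le> N"
  shows "laguerre_moments \<alpha> p = (\<Sum>k\<le>N. coeff p k * pochhammer (\<alpha> + 1) k)"
  unfolding laguerre_moments_def using assms
  by (intro sum.mono_neutral_left) (auto simp: coeff_eq_0)

lemma lin_functional_laguerre_moments: "lin_functional (laguerre_moments \<alpha>)"
  unfolding lin_functional_def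
proof (intro conjI allI)
  fix p q :: "complex poly"
  have "degree (p + q) \<le> max (degree p) (degree q)"
    by (rule degree_add_le_max)
  then show "laguerre_moments \<alpha> (p + q) = laguerre_moments \<alpha> p + laguerre_moments \<alpha> q"
    by (simp add: laguerre_moments_eq[of _ "max (degree p) (degree q)"] sum.distrib algebra_simps)
next
  fix c p
  show "laguerre_moments \<alpha> (smult c p) = c * laguerre_moments \<alpha> p"
    by (simp add: laguerre_moments_eq[of "smult c p" "degree p"] laguerre_moments_def
        sum_distrib_left algebra_simps)
qed

lemma laguerre_moments_monom: "laguerre_moments \<alpha> (monom c k) = c * pochhammer (\<alpha> + 1) k"
proof -
  have "laguerre_moments \<alpha> (monom c k) = (\<Sum>j\<le>k. coeff (monom c k) j * pochhammer (\<alpha> + 1) j)"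
    by (rule laguerre_moments_eq) (simp add: degree_monom_le)
  also have "\<dots> = (\<Sum>j\<le>k. if j = k then c * pochhammer (\<alpha> + 1) j else 0)"
    by (rule sum.cong) (auto simp: coeff_monom)
  finally show ?thesis by simp
qed

lemma laguerre_pearson_laguerre_moments: "laguerre_pearson \<alpha> (laguerre_moments \<alpha>)"
proof -
  let ?U = "laguerre_moments \<alpha>"
  define \<phi> where "\<phi> p = - ?U ([:0, 1:] * pderiv p) + ?U ([:- \<alpha> - 1, 1:] * p)" for p
  have U: "lin_functional ?U" by (rule lin_functional_laguerre_moments)
  have "lin_functional \<phi>"
    unfolding lin_functional_def \<phi>_def
    by (simp only: pderiv_add pderiv_smult distrib_left mult_smult_right
        lin_functional_add[OF U] lin_functional_smult[OF U]) (simp add: algebra_simps)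
  moreover have "\<phi> (monom 1 k) = 0" for k
  proof -
    have x_pderiv: "[:0, 1:] * pderiv (monom 1 k) = monom (of_nat k) k"
    proof (cases k)
      case (Suc j)
      then have "pderiv (monom 1 k) = monom (of_nat k) j" by (simp add: pderiv_monom)
      then show ?thesis using Suc by (simp add: monom_Suc)
    qed (simp add: pderiv_monom)
    have shift: "[:- \<alpha> - 1, 1:] * monom 1 k = monom (- \<alpha> - 1) k + monom 1 (Suc k)"
      by (simp add: monom_Suc algebra_simps smult_monom)
    show ?thesis
      unfolding \<phi>_def x_pderiv shift
      by (simp add: lin_functional_add[OF U] laguerre_moments_monom pochhammer_rec' algebra_simps)
  qed
  ultimately have "\<phi> p = 0" for p
    by (subst lin_functional_eq_sum_monoms) simp_all
  then show ?thesis
    unfolding laguerre_pearson_def \<phi>_def by simp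
qed

lemma laguerre_coeff_Suc_Suc:
  assumes "k \<le> n"
  shows "of_nat (Suc k) * (\<alpha> + of_nat k + 1) * laguerre_coeff \<alpha> (Suc n) (Suc k)
       = of_nat (Suc n) * (\<alpha> + of_nat n + 1) * laguerre_coeff \<alpha> n k"
proof -
  define m where "m = n - k"
  have binomial: "of_nat (Suc k) * of_nat (Suc n choose Suc k)
      = (of_nat (Suc n) * of_nat (n choose k) :: complex)"
    using Suc_times_binomial[of k n] by (metis of_nat_mult)
  have "(\<alpha> + of_nat k + 1) * pochhammer (\<alpha> + of_nat (Suc k) + 1) m
      = pochhammer (\<alpha> + of_nat k + 1) (Suc m)"
    by (simp add: pochhammer_rec add_ac)
  also have "\<dots> = (\<alpha> + of_nat n + 1) * pochhammer (\<alpha> + of_nat k + 1) m"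
    using assms by (simp add: pochhammer_rec' m_def add_ac)
  finally have "of_nat (Suc k) * (\<alpha> + of_nat k + 1) * laguerre_coeff \<alpha> (Suc n) (Suc k)
      = (-1) ^ m * (of_nat (Suc k) * of_nat (Suc n choose Suc k))
        * ((\<alpha> + of_nat n + 1) * pochhammer (\<alpha> + of_nat k + 1) m)"
    by (simp add: laguerre_coeff_def m_def mult_ac)
  then show ?thesis
    by (simp only: binomial) (simp add: laguerre_coeff_def m_def mult_ac)
qed

lemma laguerre_coeff_Suc:
  assumes "k < n"
  shows "of_nat (Suc k) * (\<alpha> + of_nat k + 1) * laguerre_coeff \<alpha> n (Suc k)
       = (of_nat k - of_nat n) * laguerre_coeff \<alpha> n k"
proof -
  define m where "m = n - Suc k"
  have nk: "n - k = Suc m" using assms m_def by simp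
  have "Suc k * (n choose Suc k) = (n - k) * (n choose k)"
    using binomial_absorption[of k n] binomial_absorb_comp[of n k] by simp
  then have binomial: "of_nat (Suc k) * of_nat (n choose Suc k)
      = ((of_nat n - of_nat k) * of_nat (n choose k) :: complex)"
    using assms by (metis of_nat_diff of_nat_mult less_imp_le)
  have pochhammer: "pochhammer (\<alpha> + of_nat k + 1) (Suc m)
      = (\<alpha> + of_nat k + 1) * pochhammer (\<alpha> + of_nat (Suc k) + 1) m"
    by (simp add: pochhammer_rec add_ac)
  have "of_nat (Suc k) * (\<alpha> + of_nat k + 1) * laguerre_coeff \<alpha> n (Suc k)
      = (-1) ^ m * (of_nat (Suc k) * of_nat (n choose Suc k))
        * ((\<alpha> + of_nat k + 1) * pochhammer (\<alpha> + of_nat (Suc k) + 1) m)"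
    by (simp add: laguerre_coeff_def m_def mult_ac)
  also have "\<dots> = (-1) ^ m * ((of_nat n - of_nat k) * of_nat (n choose k))
      * pochhammer (\<alpha> + of_nat k + 1) (Suc m)"
    by (simp only: binomial pochhammer)
  also have "\<dots> = (of_nat k - of_nat n) * laguerre_coeff \<alpha> n k"
    by (simp add: laguerre_coeff_def nk algebra_simps)
  finally show ?thesis .
qed

lemma laguerre_poly_Lam:
  assumes "a0 = a1 * \<alpha>"
  shows "Lam a0 a1 (laguerre_poly \<alpha> (Suc n)) = smult (rho a0 a1 n) (laguerre_poly \<alpha> n)"
proof (rule poly_eqI)
  fix k
  show "coeff (Lam a0 a1 (laguerre_poly \<alpha> (Suc n))) k
      = coeff (smult (rho a0 a1 n) (laguerre_poly \<alpha> n)) k"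
  proof (cases "k \<le> n")
    case True
    have "Lam_factor a0 a1 (Suc k) * laguerre_coeff \<alpha> (Suc n) (Suc k)
        = a1 * (of_nat (Suc k) * (\<alpha> + of_nat k + 1) * laguerre_coeff \<alpha> (Suc n) (Suc k))"
      by (simp add: Lam_factor_def assms algebra_simps)
    also have "\<dots> = a1 * (of_nat (Suc n) * (\<alpha> + of_nat n + 1) * laguerre_coeff \<alpha> n k)"
      by (simp only: laguerre_coeff_Suc_Suc[OF True])
    also have "\<dots> = rho a0 a1 n * laguerre_coeff \<alpha> n k"
      by (simp add: rho_def assms algebra_simps)
    finally show ?thesis
      using True by (simp add: coeff_Lam coeff_laguerre_poly)
  qed (simp add: coeff_Lam coeff_laguerre_poly)
qed

lemma laguerre_op_laguerre_poly:
  "laguerre_op \<alpha> (laguerre_poly \<alpha> n) = smult (- of_nat n) (laguerre_poly \<alpha> n)"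
proof (rule poly_eqI)
  fix k
  consider "k < n" | "k = n" | "k > n" by linarith
  then show "coeff (laguerre_op \<alpha> (laguerre_poly \<alpha> n)) k
      = coeff (smult (- of_nat n) (laguerre_poly \<alpha> n)) k"
  proof cases
    case 1
    then show ?thesis
      using laguerre_coeff_Suc[OF 1, of \<alpha>]
      by (simp add: coeff_laguerre_op coeff_laguerre_poly algebra_simps)
  qed (simp_all add: coeff_laguerre_op coeff_laguerre_poly)
qed

lemma laguerre_moments_orthogonal_lower:
  assumes "\<forall>k\<ge>d. coeff q k = 0" "d \<le> n"
  shows "laguerre_moments \<alpha> (laguerre_poly \<alpha> n * q) = 0"
  using assms
proof (induction d arbitrary: q)
  case 0
  then have "q = 0" by (simp add: poly_eq_iff)
  then show ?case by (simp add: lin_functional_zero[OF lin_functional_laguerre_moments])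
next
  case (Suc d)
  let ?U = "laguerre_moments \<alpha>" and ?L = "laguerre_poly \<alpha> n"
  have U: "lin_functional ?U" by (rule lin_functional_laguerre_moments)
  define r where "r = laguerre_op \<alpha> q + smult (of_nat d) q"
  \<comment> \<open>the top coefficient cancels, so \<open>r\<close> is of lower degree than \<open>q\<close>\<close>
  have "\<forall>k\<ge>d. coeff r k = 0"
  proof (intro allI impI)
    fix k assume "d \<le> k"
    then show "coeff r k = 0"
      using Suc.prems(1) by (cases "k = d") (simp_all add: r_def coeff_laguerre_op)
  qed
  then have "?U (?L * r) = 0"
    using Suc by simp
  moreover have "- of_nat n * ?U (?L * q) = ?U (q * laguerre_op \<alpha> ?L)"
    by (simp add: laguerre_op_laguerre_poly lin_functional_simps[OF U] mult.commute)
  moreover have "?U (q * laguerre_op \<alpha> ?L) = ?U (?L * r) - of_nat d * ?U (?L * q)"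
    using laguerre_pearson_op_symmetric[OF U laguerre_pearson_laguerre_moments, of q ?L]
    by (simp add: r_def distrib_left lin_functional_simps[OF U])
  ultimately have "(of_nat n - of_nat d) * ?U (?L * q) = 0"
    by (simp add: algebra_simps)
  moreover have "(of_nat n - of_nat d :: complex) \<noteq> 0"
    using Suc.prems(2) by (simp del: of_nat_diff)
  ultimately show ?case by simp
qed

lemma orthogonal_family_laguerre_poly:
  "orthogonal_family (laguerre_moments \<alpha>) (laguerre_poly \<alpha>)"
proof
  have lower: "laguerre_moments \<alpha> (laguerre_poly \<alpha> n * laguerre_poly \<alpha> m) = 0"
    if "m < n" for n m
    using that by (intro laguerre_moments_orthogonal_lower[where d = "Suc m"])
      (simp_all add: coeff_laguerre_poly)
  fix n m :: nat
  assume "n \<noteq> m"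
  then show "laguerre_moments \<alpha> (laguerre_poly \<alpha> n * laguerre_poly \<alpha> m) = 0"
    using lower[of m n] lower[of n m] by (cases "m < n") (simp_all add: mult.commute)
qed (simp_all add: lin_functional_laguerre_moments MPS_laguerre_poly)

lemma laguerre_moments_norm_nonzero:
  assumes "\<forall>n::nat. n \<ge> 1 \<longrightarrow> a0 + a1 * of_nat n \<noteq> 0" "a0 = a1 * \<alpha>"
  shows "laguerre_moments \<alpha> (laguerre_poly \<alpha> n * laguerre_poly \<alpha> n) \<noteq> 0"
proof (induction n)
  case 0
  then show ?case
    using MPS_0[OF MPS_laguerre_poly] by (simp add: laguerre_moments_def)
next
  case (Suc m)
  have "rho a0 a1 m \<noteq> 0"
    using Lam_factor_nonzero[OF assms(1)] by (simp add: rho_eq_Lam_factor)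
  then have "a1 * laguerre_moments \<alpha> (laguerre_poly \<alpha> (Suc m) * laguerre_poly \<alpha> (Suc m)) \<noteq> 0"
    using orthogonal_family.laguerre_pearson_norm_recurrence[OF orthogonal_family_laguerre_poly
        laguerre_pearson_laguerre_moments assms(2) laguerre_poly_Lam[OF assms(2)]] Suc.IH
    by simp
  then show ?case by auto
qed

lemma is_laguerre_laguerre_poly:
  assumes "\<forall>n::nat. n \<ge> 1 \<longrightarrow> a0 + a1 * of_nat n \<noteq> 0" "a0 = a1 * \<alpha>"
  shows "is_laguerre \<alpha> (laguerre_poly \<alpha>)"
  using orthogonal_family_laguerre_poly laguerre_moments_norm_nonzero[OF assms]
    laguerre_pearson_laguerre_moments MPS_laguerre_poly
  unfolding is_laguerre_def orthogonal_wrt_def orthogonal_family_def by blast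

lemma is_laguerre_Lambda_Appell_orthogonal:
  assumes "is_laguerre \<alpha> L" "a0 = a1 * \<alpha>"
  shows "Lambda_Appell a0 a1 L \<and> orthogonal_MPS L"
proof -
  obtain u where "MPS L" "orthogonal_wrt u L" "laguerre_pearson \<alpha> u"
    using assms(1) by (auto simp: is_laguerre_def)
  then show ?thesis
    using regular_orthogonal_family.laguerre_pearson_Lambda_Appell[OF regular_orthogonal_familyI
        _ assms(2)]
    by (auto simp: Lambda_Appell_def orthogonal_MPS_def)
qed

lemma coeff_affine_transform_0:
  "coeff (affine_transform c 0 B n) k = inverse (c ^ n) * c ^ k * coeff (B n) k"
  by (simp add: affine_transform_def coeff_pcompose_linear)

lemma MPS_affine_transform_0:
  assumes "c \<noteq> 0" "MPS B"
  shows "MPS (affine_transform c 0 B)"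
  unfolding MPS_def
proof
  fix n
  have "degree (affine_transform c 0 B n) = n"
    using assms by (simp add: affine_transform_def degree_pcompose MPS_degree)
  then show "degree (affine_transform c 0 B n) = n \<and> lead_coeff (affine_transform c 0 B n) = 1"
    using assms by (simp add: coeff_affine_transform_0 MPS_lead)
qed

lemma Lambda_Appell_affine_transform_0:
  assumes "c \<noteq> 0" "Lambda_Appell a0 a1 B"
  shows "Lambda_Appell a0 a1 (affine_transform c 0 B)"
  unfolding Lambda_Appell_def
proof (intro conjI allI)
  show "MPS (affine_transform c 0 B)"
    using assms MPS_affine_transform_0 unfolding Lambda_Appell_def by blast
next
  fix n
  show "Lam a0 a1 (affine_transform c 0 B (Suc n)) = smult (rho a0 a1 n) (affine_transform c 0 B n)"
  proof (rule poly_eqI)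
    fix k
    have "coeff (Lam a0 a1 (affine_transform c 0 B (Suc n))) k
        = inverse (c ^ Suc n) * c ^ Suc k * (Lam_factor a0 a1 (Suc k) * coeff (B (Suc n)) (Suc k))"
      by (simp add: coeff_Lam coeff_affine_transform_0 mult_ac)
    also have "\<dots> = inverse (c ^ Suc n) * c ^ Suc k * (rho a0 a1 n * coeff (B n) k)"
      by (simp add: Lambda_Appell_coeff[OF assms(2)] rho_eq_Lam_factor)
    also have "\<dots> = coeff (smult (rho a0 a1 n) (affine_transform c 0 B n)) k"
      using assms(1) by (simp add: coeff_affine_transform_0 field_simps)
    finally show "coeff (Lam a0 a1 (affine_transform c 0 B (Suc n))) k
        = coeff (smult (rho a0 a1 n) (affine_transform c 0 B n)) k" .
  qed
qed

lemma orthogonal_wrt_affine_transform_0: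
  assumes "c \<noteq> 0" "orthogonal_wrt u B"
  shows "orthogonal_wrt (\<lambda>p. u (pcompose p [:0, inverse c:])) (affine_transform c 0 B)"
proof -
  have lin: "lin_functional u"
    using assms(2) by (simp add: orthogonal_wrt_def)
  have "pcompose [:0, c:] [:0, inverse c:] = [:0, 1:]"
    using assms(1) by (simp add: pcompose_pCons)
  then have rescale: "pcompose (affine_transform c 0 B n * affine_transform c 0 B m) [:0, inverse c:]
      = smult (inverse (c ^ n) * inverse (c ^ m)) (B n * B m)" for n m
    by (simp add: affine_transform_def pcompose_mult pcompose_smult pcompose_assoc[symmetric] mult_ac)
  show ?thesis
    using assms unfolding orthogonal_wrt_def lin_functional_def rescale
    by (simp add: pcompose_add pcompose_smult lin_functional_smult[OF lin])
qed

text \<open>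
  The coefficient equations in degrees at most 5 of a \<open>\<Lambda>\<close>-Appell sequence satisfying
  \<open>x B_n = B_(n+1) + s_n B_n + t_n B_(n-1)\<close>: here \<open>bnk\<close> stands for the coefficient of
  \<open>x^k\<close> in \<open>B_n\<close> and \<open>lk = k f(k)\<close>; the equations \<open>ap\<close> come from \<open>\<Lambda>\<close>, the
  equations \<open>r\<close> from the recurrence.
\<close>

locale appell_recurrence_low_degrees =
  fixes a0 a1 l1 l2 l3 l4 l5 b10 b20 b21 b30 b31 b32 b40 b41 b42 b43 b51 b53
    s1 s2 s3 s4 t1 t2 t3 t4 :: complex
  assumes l: "l1 = a0 + a1" "l2 = 2 * (a0 + 2 * a1)" "l3 = 3 * (a0 + 3 * a1)"
      "l4 = 4 * (a0 + 4 * a1)" "l5 = 5 * (a0 + 5 * a1)"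
    and nonzero: "a1 \<noteq> 0" "l1 \<noteq> 0" "l2 \<noteq> 0" "l3 \<noteq> 0" "t1 \<noteq> 0"
    and ap21: "l1 * b21 = l2 * b10" and ap32: "l2 * b32 = l3 * b21" and ap31: "l1 * b31 = l3 * b20"
    and ap43: "l3 * b43 = l4 * b32" and ap42: "l2 * b42 = l4 * b31" and ap41: "l1 * b41 = l4 * b30"
    and ap53: "l3 * b53 = l5 * b42" and ap51: "l1 * b51 = l5 * b40"
    and r11: "b10 = b21 + s1" and r10: "0 = b20 + s1 * b10 + t1"
    and r22: "b21 = b32 + s2" and r21: "b20 = b31 + s2 * b21 + t2"
    and r20: "0 = b30 + s2 * b20 + t2 * b10"
    and r33: "b32 = b43 + s3" and r32: "b31 = b42 + s3 * b32 + t3"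
    and r31: "b30 = b41 + s3 * b31 + t3 * b21" and r30: "0 = b40 + s3 * b30 + t3 * b20"
    and r43: "b42 = b53 + s4 * b43 + t4" and r41: "b40 = b51 + s4 * b41 + t4 * b31"
begin

lemma b10_nonzero: "b10 \<noteq> 0"
proof
  assume "b10 = 0"
  then have "b21 = 0" using ap21 nonzero by simp
  then have "s1 = 0" using r11 \<open>b10 = 0\<close> by simp
  then have "b20 \<noteq> 0" using r10 nonzero(5) by auto
  have "b32 = 0" using ap32 \<open>b21 = 0\<close> nonzero by simp
  then have "b43 = 0" using ap43 nonzero by simp
  have "s2 = 0" using r22 \<open>b21 = 0\<close> \<open>b32 = 0\<close> by simp
  have "s3 = 0" using r33 \<open>b43 = 0\<close> \<open>b32 = 0\<close> by simp
  have "b30 = 0" using r20 \<open>s2 = 0\<close> \<open>b10 = 0\<close> by simp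
  then have "b41 = 0" using ap41 nonzero by simp
  have b31: "b31 = l3 * b20 / l1" using ap31 nonzero by (simp add: field_simps)
  have b42: "b42 = l4 * l3 * b20 / (l1 * l2)" using ap42 b31 nonzero by (simp add: field_simps)
  have b53: "b53 = l5 * l4 * b20 / (l1 * l2)" using ap53 b42 nonzero by (simp add: field_simps)
  have b40: "b40 = - (b31 - b42) * b20"
    using r30 r32 \<open>s3 = 0\<close> by (simp add: eq_neg_iff_add_eq_0 algebra_simps)
  have b51: "b51 = l5 * b40 / l1" using ap51 nonzero by (simp add: field_simps)
  have t4: "t4 = b42 - b53" using r43 \<open>b43 = 0\<close> by simp
  have "b40 - b51 - t4 * b31 = 0" using r41 \<open>b41 = 0\<close> by simp
  then have "l1 * l1 * l2 * (b40 - b51 - t4 * b31) = 0" by simp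
  also have "l1 * l1 * l2 * (b40 - b51 - t4 * b31)
      = l3 * b20^2 * ((l1 - l5) * (l4 - l2) - l4 * (l3 - l5))"
    unfolding b51 t4 b40 b42 b53 b31 using nonzero
    by (simp add: field_simps) (simp add: algebra_simps power2_eq_square)
  also have "(l1 - l5) * (l4 - l2) - l4 * (l3 - l5) = - 32 * a1^2"
    unfolding l by (simp add: algebra_simps power2_eq_square)
  finally show False
    using nonzero \<open>b20 \<noteq> 0\<close> by simp
qed

lemma constant_terms: "b10 \<noteq> 0 \<and> 2 * l1 * b20 = l2 * b10^2"
proof -
  have b21: "b21 = l2 * b10 / l1" using ap21 nonzero by (simp add: field_simps)
  have b32: "b32 = l3 * b10 / l1" using ap32 b21 nonzero by (simp add: field_simps)
  have b43: "b43 = l4 * b10 / l1" using ap43 b32 nonzero by (simp add: field_simps)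
  have b31: "b31 = l3 * b20 / l1" using ap31 nonzero by (simp add: field_simps)
  have b42: "b42 = l4 * l3 * b20 / (l1 * l2)" using ap42 b31 nonzero by (simp add: field_simps)
  have s2: "s2 = b21 - b32" using r22 by simp
  have t2: "t2 = b20 - b31 - s2 * b21" using r21 by simp
  have s3: "s3 = b32 - b43" using r33 by simp
  have t3: "t3 = b31 - b42 - s3 * b32" using r32 by simp
  have b30: "b30 = - (s2 * b20 + t2 * b10)"
    using r20 by (simp add: eq_neg_iff_add_eq_0 algebra_simps)
  have "l1 * b30 = l1 * b41 + l1 * (s3 * b31 + t3 * b21)"
    using r31 by (simp add: algebra_simps)
  then have "(l1 - l4) * b30 - l1 * (s3 * b31 + t3 * b21) = 0"
    using ap41 by (simp add: algebra_simps)
  then have "l1^2 * ((l1 - l4) * b30 - l1 * (s3 * b31 + t3 * b21)) = 0" by simp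
  also have "l1^2 * ((l1 - l4) * b30 - l1 * (s3 * b31 + t3 * b21))
      = - b10 * (l1 * ((l1 - l4) * (l1 + l2 - 2 * l3) + l3 * (l2 + l3 - 2 * l4)) * b20
        - l2 * ((l1 - l4) * (l2 - l3) + l3 * (l3 - l4)) * b10^2)"
    unfolding b30 t3 s3 t2 s2 b42 b31 b43 b32 b21 using nonzero
    by (simp add: field_simps) (simp add: algebra_simps power2_eq_square)
  also have "l1 * ((l1 - l4) * (l1 + l2 - 2 * l3) + l3 * (l2 + l3 - 2 * l4)) = 24 * a1^2 * l1"
    unfolding l by (simp add: algebra_simps power2_eq_square)
  also have "l2 * ((l1 - l4) * (l2 - l3) + l3 * (l3 - l4)) = 12 * a1^2 * l2"
    unfolding l by (simp add: algebra_simps power2_eq_square)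
  finally have "- 12 * a1^2 * b10 * (2 * l1 * b20 - l2 * b10^2) = 0"
    by (simp add: algebra_simps power2_eq_square)
  then show ?thesis
    using nonzero b10_nonzero by simp
qed

end

lemma coeff_x_mult_eq:
  fixes P Q R S :: "complex poly"
  assumes "[:0, 1:] * P = Q + smult s R + smult t S"
  shows "(if k = 0 then 0 else coeff P (k - 1)) = coeff Q k + s * coeff R k + t * coeff S k"
  using arg_cong[where f = "\<lambda>p. coeff p k", OF assms]
  by (simp only: coeff_x_mult coeff_add coeff_smult)

lemma orthogonal_Lambda_Appell_constant_terms:
  assumes nz: "\<forall>n::nat. n \<ge> 1 \<longrightarrow> a0 + a1 * of_nat n \<noteq> 0" and "a1 \<noteq> 0"
    and A: "Lambda_Appell a0 a1 B" and "orthogonal_wrt v B"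
  shows "coeff (B 1) 0 \<noteq> 0
    \<and> 2 * Lam_factor a0 a1 1 * coeff (B 2) 0 = Lam_factor a0 a1 2 * (coeff (B 1) 0)^2"
proof -
  have M: "MPS B" using A by (simp add: Lambda_Appell_def)
  interpret regular_orthogonal_family v B
    using assms(4) M by (rule regular_orthogonal_familyI)
  have rec: "\<exists>s t. t \<noteq> 0
      \<and> [:0, 1:] * B (Suc n) = B (Suc (Suc n)) + smult s (B (Suc n)) + smult t (B n)" for n
    by (rule three_term_recurrence)
  obtain s1 t1 where t1: "t1 \<noteq> 0"
    and R1: "[:0, 1:] * B 1 = B 2 + smult s1 (B 1) + smult t1 (B 0)"
    using rec[of 0] by (auto simp: numeral_2_eq_2)
  obtain s2 t2 where R2: "[:0, 1:] * B 2 = B 3 + smult s2 (B 2) + smult t2 (B 1)"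
    using rec[of 1] by (auto simp: eval_nat_numeral)
  obtain s3 t3 where R3: "[:0, 1:] * B 3 = B 4 + smult s3 (B 3) + smult t3 (B 2)"
    using rec[of 2] by (auto simp: eval_nat_numeral)
  obtain s4 t4 where R4: "[:0, 1:] * B 4 = B 5 + smult s4 (B 4) + smult t4 (B 3)"
    using rec[of 3] by (auto simp: eval_nat_numeral)
  have AP: "Lam_factor a0 a1 (Suc k) * coeff (B (Suc n)) (Suc k)
      = Lam_factor a0 a1 (Suc n) * coeff (B n) k" for n k
    by (rule Lambda_Appell_coeff[OF A])
  note B = MPS_lead[OF M] MPS_coeff_above[OF M] MPS_0[OF M]
  show ?thesis
  proof (rule appell_recurrence_low_degrees.constant_terms, unfold_locales)
    show "Lam_factor a0 a1 1 = a0 + a1" "Lam_factor a0 a1 2 = 2 * (a0 + 2 * a1)"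
      "Lam_factor a0 a1 3 = 3 * (a0 + 3 * a1)" "Lam_factor a0 a1 4 = 4 * (a0 + 4 * a1)"
      "Lam_factor a0 a1 5 = 5 * (a0 + 5 * a1)"
      by (simp_all add: Lam_factor_def algebra_simps)
    show "Lam_factor a0 a1 1 \<noteq> 0" "Lam_factor a0 a1 2 \<noteq> 0" "Lam_factor a0 a1 3 \<noteq> 0"
      using Lam_factor_nonzero[OF nz, of 0] Lam_factor_nonzero[OF nz, of 1]
        Lam_factor_nonzero[OF nz, of 2]
      by (simp_all add: eval_nat_numeral)
    show "Lam_factor a0 a1 1 * coeff (B 2) 1 = Lam_factor a0 a1 2 * coeff (B 1) 0"
      "Lam_factor a0 a1 2 * coeff (B 3) 2 = Lam_factor a0 a1 3 * coeff (B 2) 1"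
      "Lam_factor a0 a1 1 * coeff (B 3) 1 = Lam_factor a0 a1 3 * coeff (B 2) 0"
      "Lam_factor a0 a1 3 * coeff (B 4) 3 = Lam_factor a0 a1 4 * coeff (B 3) 2"
      "Lam_factor a0 a1 2 * coeff (B 4) 2 = Lam_factor a0 a1 4 * coeff (B 3) 1"
      "Lam_factor a0 a1 1 * coeff (B 4) 1 = Lam_factor a0 a1 4 * coeff (B 3) 0"
      "Lam_factor a0 a1 3 * coeff (B 5) 3 = Lam_factor a0 a1 5 * coeff (B 4) 2"
      "Lam_factor a0 a1 1 * coeff (B 5) 1 = Lam_factor a0 a1 5 * coeff (B 4) 0"
      using AP[of 0 1] AP[of 1 2] AP[of 0 2] AP[of 2 3] AP[of 1 3] AP[of 0 3] AP[of 2 4] AP[of 0 4]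
      by (simp_all add: eval_nat_numeral)
    show "coeff (B 1) 0 = coeff (B 2) 1 + s1" "0 = coeff (B 2) 0 + s1 * coeff (B 1) 0 + t1"
      using coeff_x_mult_eq[OF R1, of 1] coeff_x_mult_eq[OF R1, of 0] by (simp_all add: B)
    show "coeff (B 2) 1 = coeff (B 3) 2 + s2"
      "coeff (B 2) 0 = coeff (B 3) 1 + s2 * coeff (B 2) 1 + t2"
      "0 = coeff (B 3) 0 + s2 * coeff (B 2) 0 + t2 * coeff (B 1) 0"
      using coeff_x_mult_eq[OF R2, of 2] coeff_x_mult_eq[OF R2, of 1] coeff_x_mult_eq[OF R2, of 0]
      by (simp_all add: B)
    show "coeff (B 3) 2 = coeff (B 4) 3 + s3"
      "coeff (B 3) 1 = coeff (B 4) 2 + s3 * coeff (B 3) 2 + t3"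
      "coeff (B 3) 0 = coeff (B 4) 1 + s3 * coeff (B 3) 1 + t3 * coeff (B 2) 1"
      "0 = coeff (B 4) 0 + s3 * coeff (B 3) 0 + t3 * coeff (B 2) 0"
      using coeff_x_mult_eq[OF R3, of 3] coeff_x_mult_eq[OF R3, of 2] coeff_x_mult_eq[OF R3, of 1]
        coeff_x_mult_eq[OF R3, of 0]
      by (simp_all add: B)
    show "coeff (B 4) 2 = coeff (B 5) 3 + s4 * coeff (B 4) 3 + t4"
      "coeff (B 4) 0 = coeff (B 5) 1 + s4 * coeff (B 4) 1 + t4 * coeff (B 3) 1"
      using coeff_x_mult_eq[OF R4, of 3] coeff_x_mult_eq[OF R4, of 1] by (simp_all add: B)
  qed (fact assms(2) t1)+
qed

lemma Lambda_Appell_orthogonal_Suc_eqI: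
  assumes nz: "\<forall>n::nat. n \<ge> 1 \<longrightarrow> a0 + a1 * of_nat n \<noteq> 0"
    and A: "Lambda_Appell a0 a1 B" "Lambda_Appell a0 a1 S"
    and O: "orthogonal_wrt v B" "orthogonal_wrt w S"
    and eq: "B (Suc n) = S (Suc n)" "B (Suc (Suc n)) = S (Suc (Suc n))"
  shows "B (Suc (Suc (Suc n))) = S (Suc (Suc (Suc n)))"
proof -
  let ?N = "Suc (Suc n)"
  have MB: "MPS B" and MS: "MPS S" using A by (simp_all add: Lambda_Appell_def)
  obtain s t where RB: "[:0, 1:] * B ?N = B (Suc ?N) + smult s (B ?N) + smult t (B (Suc n))"
    using regular_orthogonal_family.three_term_recurrence[OF regular_orthogonal_familyI[OF O(1) MB]]
    by blast
  obtain s' t' where RS: "[:0, 1:] * S ?N = S (Suc ?N) + smult s' (S ?N) + smult t' (S (Suc n))"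
    using regular_orthogonal_family.three_term_recurrence[OF regular_orthogonal_familyI[OF O(2) MS]]
    by blast
  have top: "coeff (B (Suc ?N)) (Suc j) = coeff (S (Suc ?N)) (Suc j)" for j
  proof -
    have "Lam_factor a0 a1 (Suc j) * coeff (B (Suc ?N)) (Suc j)
        = Lam_factor a0 a1 (Suc j) * coeff (S (Suc ?N)) (Suc j)"
      using Lambda_Appell_coeff[OF A(1), of j ?N] Lambda_Appell_coeff[OF A(2), of j ?N] eq(2)
      by simp
    then show ?thesis using Lam_factor_nonzero[OF nz] by simp
  qed
  note coeffs = MPS_lead[OF MB] MPS_coeff_above[OF MB] MPS_lead[OF MS] MPS_coeff_above[OF MS]
  have "s = s'"
    using coeff_x_mult_eq[OF RB, of ?N] coeff_x_mult_eq[OF RS, of ?N] top[of "Suc n"] eq(2)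
    by (simp add: coeffs)
  moreover have "t = t'"
    using coeff_x_mult_eq[OF RB, of "Suc n"] coeff_x_mult_eq[OF RS, of "Suc n"] top[of n] eq(2)
      \<open>s = s'\<close>
    by (simp add: coeffs)
  ultimately have "coeff (B (Suc ?N)) 0 = coeff (S (Suc ?N)) 0"
    using coeff_x_mult_eq[OF RB, of 0] coeff_x_mult_eq[OF RS, of 0] eq
    by (metis add_right_cancel add.commute)
  then show ?thesis
    by (rule Lambda_Appell_Suc_eqI[OF nz A eq(2)])
qed

lemma Lambda_Appell_orthogonal_unique:
  assumes nz: "\<forall>n::nat. n \<ge> 1 \<longrightarrow> a0 + a1 * of_nat n \<noteq> 0"
    and A: "Lambda_Appell a0 a1 B" "Lambda_Appell a0 a1 S"
    and O: "orthogonal_wrt v B" "orthogonal_wrt w S"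
    and "coeff (B 1) 0 = coeff (S 1) 0" "coeff (B 2) 0 = coeff (S 2) 0"
  shows "B = S"
proof -
  have "B n = S n \<and> B (Suc n) = S (Suc n)" for n
  proof (induction n)
    case 0
    have "B 0 = S 0"
      using A by (simp add: Lambda_Appell_def MPS_0)
    then show ?case
      using Lambda_Appell_Suc_eqI[OF nz A] assms(6) by simp
  next
    case (Suc n)
    then show ?case
    proof (cases n)
      case 0
      then show ?thesis
        using Suc.IH Lambda_Appell_Suc_eqI[OF nz A, of 1] assms(7) by (simp add: numeral_2_eq_2)
    next
      case (Suc m)
      then show ?thesis
        using Suc.IH Lambda_Appell_orthogonal_Suc_eqI[OF nz A O, of m] by simp
    qed
  qed
  then show ?thesis by blast
qed

lemma laguerre_affine_constant_terms:
  "coeff (affine_transform c 0 (laguerre_poly \<alpha>) 1) 0 = - (\<alpha> + 1) / c"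
  "coeff (affine_transform c 0 (laguerre_poly \<alpha>) 2) 0 = (\<alpha> + 1) * (\<alpha> + 2) / c^2"
  by (simp_all add: coeff_affine_transform_0 coeff_laguerre_poly laguerre_coeff_def
      numeral_2_eq_2 pochhammer_rec algebra_simps divide_inverse)

lemma Lambda_Appell_orthogonal_eq_affine_laguerre:
  assumes "a1 \<noteq> 0" and nz: "\<forall>n::nat. n \<ge> 1 \<longrightarrow> a0 + a1 * of_nat n \<noteq> 0"
    and A: "Lambda_Appell a0 a1 B" and O: "orthogonal_wrt v B"
  shows "\<exists>c. c \<noteq> 0 \<and> B = affine_transform c 0 (laguerre_poly (a0 / a1))"
proof -
  define \<alpha> where "\<alpha> = a0 / a1"
  define b1 where "b1 = coeff (B 1) 0"
  define c where "c = - (\<alpha> + 1) / b1"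
  define S where "S = affine_transform c 0 (laguerre_poly \<alpha>)"
  have \<alpha>: "a0 = a1 * \<alpha>"
    using assms(1) by (simp add: \<alpha>_def)
  have "b1 \<noteq> 0" and b2: "2 * Lam_factor a0 a1 1 * coeff (B 2) 0 = Lam_factor a0 a1 2 * b1^2"
    using orthogonal_Lambda_Appell_constant_terms[OF nz assms(1) A O] by (simp_all add: b1_def)
  have "a0 + a1 * of_nat 1 = a1 * (\<alpha> + 1)"
    using \<alpha> by (simp add: algebra_simps)
  then have "\<alpha> + 1 \<noteq> 0"
    using nz by auto
  then have "c \<noteq> 0"
    using \<open>b1 \<noteq> 0\<close> unfolding c_def by (metis divide_eq_0_iff neg_equal_0_iff_equal)
  obtain u where "Lambda_Appell a0 a1 (laguerre_poly \<alpha>)" "orthogonal_wrt u (laguerre_poly \<alpha>)"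
    using is_laguerre_Lambda_Appell_orthogonal[OF is_laguerre_laguerre_poly[OF nz \<alpha>] \<alpha>]
    by (auto simp: orthogonal_MPS_def)
  then have "Lambda_Appell a0 a1 S" "orthogonal_wrt (\<lambda>p. u (pcompose p [:0, inverse c:])) S"
    unfolding S_def using \<open>c \<noteq> 0\<close>
    by (simp_all add: Lambda_Appell_affine_transform_0 orthogonal_wrt_affine_transform_0)
  moreover have "coeff (S 1) 0 = b1"
    using \<open>\<alpha> + 1 \<noteq> 0\<close> unfolding S_def laguerre_affine_constant_terms c_def
    by (metis divide_divide_eq_right neg_equal_0_iff_equal nonzero_mult_div_cancel_left)
  moreover have "coeff (S 2) 0 = coeff (B 2) 0"
  proof -
    have "2 * (a1 * (\<alpha> + 1)) * coeff (B 2) 0 = 2 * (a1 * (\<alpha> + 2)) * b1^2"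
      using b2 \<alpha> by (simp add: Lam_factor_def algebra_simps)
    then have "(\<alpha> + 1) * coeff (B 2) 0 = (\<alpha> + 2) * b1^2"
      using assms(1) by simp
    moreover have "c^2 = (\<alpha> + 1)^2 / b1^2"
      by (simp add: c_def power_divide power2_eq_square algebra_simps)
    ultimately show ?thesis
      using \<open>\<alpha> + 1 \<noteq> 0\<close> unfolding S_def laguerre_affine_constant_terms
      by (simp add: power2_eq_square divide_eq_eq mult.commute)
  qed
  ultimately have "B = S"
    using Lambda_Appell_orthogonal_unique[OF nz A] O by (simp add: b1_def)
  then show ?thesis
    using \<open>c \<noteq> 0\<close> by (auto simp: S_def \<alpha>_def)
qed

theorem proposition8:
  fixes a0 a1 :: complex
  assumes "a1 \<noteq> 0"
    and "\<forall>n::nat. n \<ge> 1 \<longrightarrow> a0 + a1 * of_nat n \<noteq> 0"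
  shows "(\<exists>L. is_laguerre (a0 / a1) L)
    \<and> (\<forall>L. is_laguerre (a0 / a1) L \<longrightarrow> Lambda_Appell a0 a1 L \<and> orthogonal_MPS L)
    \<and> (\<forall>B. Lambda_Appell a0 a1 B \<and> orthogonal_MPS B \<longrightarrow>
          (\<exists>L c d. is_laguerre (a0 / a1) L \<and> c \<noteq> 0 \<and> B = affine_transform c d L))"
proof -
  have \<alpha>: "a0 = a1 * (a0 / a1)"
    using assms(1) by simp
  have "\<exists>c. c \<noteq> 0 \<and> B = affine_transform c 0 (laguerre_poly (a0 / a1))"
    if "Lambda_Appell a0 a1 B" "orthogonal_MPS B" for B
    using that Lambda_Appell_orthogonal_eq_affine_laguerre[OF assms]
    by (auto simp: orthogonal_MPS_def)
  then show ?thesis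
    using is_laguerre_laguerre_poly[OF assms(2) \<alpha>] is_laguerre_Lambda_Appell_orthogonal[OF _ \<alpha>]
    by blast
qed

end
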